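(* Let $(V,\omega)$ be a $2n$-dimensional symplectic vector space with compatible complex structure $J$, $\lambda\in[0,1]$, and $\tau>0$. In $\mathcal W_\lambda\otimes\mathrm{End}(\Lambda)$, the element $A_\lambda$ commutes with $K_\lambda(\tau)e^{-\lambda\tau N}$.
   Context: $V^{1,0}$ is $V$ with $i$ acting as $J$; $\Lambda=\Lambda^\bullet V^{1,0}$; $c(z)=\varepsilon_z+\iota_z$ (exterior multiplication plus contraction), with $V^*\cong V$ via $\omega(\cdot,J\cdot)$. $\mathcal W_\lambda$ is the Weyl algebra of smooth functions on $V^*$ with asymptotic expansions in homogeneous terms modulo Schwartz functions, with Moyal product $\#_\lambda$ ($(a\#_\lambda b)(x)=(\lambda\pi)^{-2n}\int e^{\frac{2i}{\lambda}\omega^*(u,w)}a(x+u)b(x+w)\,du\,dw$ for $\lambda\ne0$, pointwise product for $\lambda=0$). $A_\lambda$ is the linear function $z\mapsto c(z)$; $N\in\mathrm{End}(\Lambda)$ acts on $\Lambda^kV^{1,0}$ by $2k-n$; $K_\lambda(\tau)(v)=e^{-\tau\|v\|^2}$ if $\lambda=0$ and $(\cosh\lambda\tau)^{-n}e^{-\tanh(\lambda\tau)\|v\|^2/\lambda}$ if $\lambda\ne0$. *)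

theory Defs
  imports "HOL-Analysis.Analysis"
begin

text \<open>Standard model: V = C^n (index type 'n, n = CARD('n)), J = multiplication by i,
  omega(u,v) = Im (sum conj(u_k) v_k), so that g(u,v) = omega(u, J v) = Re (sum u_k conj(v_k)).
  V^* is identified with V via g, and omega^* with omega. V^{1,0} has basis e_S (S a subset of the index type, wedge in increasing order),
  so End(Lambda) = complex^('n set)^('n set).\<close>

type_synonym 'n symb = "complex^'n \<Rightarrow> complex^('n set)^('n set)"

definition omega :: "complex^'n \<Rightarrow> complex^'n \<Rightarrow> real" where
  "omega u v = Im (\<Sum>k\<in>UNIV. cnj (u$k) * v$k)"

definition gmet :: "complex^'n \<Rightarrow> complex^'n \<Rightarrow> real" where
  "gmet u v = Re (\<Sum>k\<in>UNIV. u$k * cnj (v$k))"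

definition wsign :: "'n::linorder set \<Rightarrow> 'n \<Rightarrow> complex" where
  "wsign S j = (-1) ^ card {i\<in>S. i < j}"

text \<open>exterior multiplication by z: e_j wedge e_S = wsign S j e_{S+j}\<close>
definition ext_mult :: "complex^('n::{finite,linorder}) \<Rightarrow> complex^('n set)^('n set)" where
  "ext_mult z = (\<chi> T S. \<Sum>j\<in>UNIV. if j \<notin> S \<and> T = insert j S then z$j * wsign S j else 0)"

text \<open>contraction by z using the hermitian metric (antilinear in z); adjoint of ext_mult z\<close>
definition contr :: "complex^('n::{finite,linorder}) \<Rightarrow> complex^('n set)^('n set)" where
  "contr z = (\<chi> T S. \<Sum>j\<in>UNIV. if j \<in> S \<and> T = S - {j} then cnj (z$j) * wsign S j else 0)"

definition cliff :: "complex^('n::{finite,linorder}) \<Rightarrow> complex^('n set)^('n set)" where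
  "cliff z = ext_mult z + contr z"

definition A_sym :: "real \<Rightarrow> ('n::{finite,linorder}) symb" where
  "A_sym lam = (\<lambda>z. cliff z)"

definition Nop :: "complex^('n::finite set)^('n set)" where
  "Nop = (\<chi> T S. if T = S then of_int (2 * int (card S) - int CARD('n)) else 0)"

definition mexp_diag :: "complex^'a^'a \<Rightarrow> complex^'a^'a" where
  "mexp_diag M = (\<chi> T S. if T = S then exp (M$S$S) else 0)"

definition Kfun :: "real \<Rightarrow> real \<Rightarrow> complex^'n \<Rightarrow> real" where
  "Kfun lam tau v = (if lam = 0 then exp (- tau * (norm v)^2)
     else inverse ((cosh (lam * tau)) ^ CARD('n)) * exp (- tanh (lam * tau) * (norm v)^2 / lam))"

definition KN :: "real \<Rightarrow> real \<Rightarrow> ('n::finite) symb" where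
  "KN lam tau v = Kfun lam tau v *\<^sub>R mexp_diag ((- (lam * tau)) *\<^sub>R Nop)"

definition cscale :: "complex \<Rightarrow> complex^'a^'b \<Rightarrow> complex^'a^'b" where
  "cscale c M = (\<chi> i j. c * M$i$j)"

text \<open>Moyal product on W_lambda (x) End(Lambda); for lambda /= 0 the oscillatory integral
  is given its standard meaning as the limit of Gaussian-regularized absolutely convergent integrals.\<close>
definition moyal :: "real \<Rightarrow> ('n::finite) symb \<Rightarrow> 'n symb \<Rightarrow> 'n symb" where
  "moyal lam a b x = (if lam = 0 then a x ** b x else
     Lim (at_right 0) (\<lambda>\<epsilon>::real. inverse ((lam * pi) ^ (2 * CARD('n))) *\<^sub>R
       (LINT p|lborel. cscale (exp (- \<epsilon> * ((norm (fst p))^2 + (norm (snd p))^2))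
                               * cis (2 / lam * omega (fst p) (snd p)))
                        (a (x + fst p) ** b (x + snd p)))))"

end

theory Submission
  imports Defs "HOL-Probability.Probability" "HOL-Real_Asymp.Real_Asymp"
begin

(*
  For lam = 0 the Moyal product is pointwise and e^(0 N) = 1, so both products are c(x) K(x).

  For lam /= 0 both products are limits of Gaussian-regularised oscillatory integrals. Write
  theta = lam tau and beta = tanh theta / lam, so that K(v) = exp (- beta |v|^2) K(0). Since A is
  linear, each regularised integral only involves the mass and the first moment of an explicit
  complex Gaussian in (u, w): integrating out the oscillating variable first leaves a real
  Gaussian, and the first moment equals -i r (rho x) times the mass, where rho = -J or J according
  to the order of the factors and r is an explicit ratio depending on the regulariser. Moving
  K(0), a multiple of e^(-theta N), across c(z) multiplies exterior multiplication by e^(-2 theta)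
  and contraction by e^(2 theta); with c(-+ i x) = -+ i ext(x) +- i contr(x) the difference of the
  two products becomes

    mass * ((1 - e^(-2 theta)) - r (1 + e^(-2 theta))) ext(x) K(0)
      + mass * ((1 - e^(2 theta)) + r (1 + e^(2 theta))) contr(x) K(0).

  As the regulariser tends to 0, r tends to lam beta = tanh theta, which kills both coefficients,
  while the mass stays bounded by (pi |lam|)^(2n).
*)

section \<open>Gaussian integrals\<close>

definition cgauss :: "real \<Rightarrow> complex \<Rightarrow> real \<Rightarrow> complex" where
  "cgauss a B t = exp (complex_of_real (- a * t\<^sup>2) + B * complex_of_real t)"

lemma norm_cgauss: "norm (cgauss a B t) = exp (- a * t\<^sup>2 + Re B * t)"
  by (simp add: cgauss_def norm_exp_eq_Re)

lemma exp_quadratic_eq_normal_density: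
  fixes a b t :: real
  assumes "a > 0"
  shows "exp (- a * t\<^sup>2 + b * t) =
    exp (b\<^sup>2 / (4 * a)) * sqrt (pi / a) * normal_density (b / (2 * a)) (sqrt (1 / (2 * a))) t"
proof -
  have sq: "(sqrt (1 / (2 * a)))\<^sup>2 = 1 / (2 * a)" using assms by simp
  have "sqrt (2 * pi * (sqrt (1 / (2 * a)))\<^sup>2) = sqrt (pi / a)"
    unfolding sq using assms by simp
  moreover have "- (t - b / (2 * a))\<^sup>2 / (2 * (sqrt (1 / (2 * a)))\<^sup>2) = - a * t\<^sup>2 + b * t - b\<^sup>2 / (4 * a)"
    using assms by (simp add: field_simps power2_eq_square)
  ultimately show ?thesis
    using assms by (simp add: normal_density_def exp_diff)
qed

lemma
  fixes a b :: real
  assumes "a > 0"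
  shows integrable_exp_quadratic: "integrable lborel (\<lambda>t. exp (- a * t\<^sup>2 + b * t))"
    and integrable_exp_quadratic_mult_abs: "integrable lborel (\<lambda>t. exp (- a * t\<^sup>2 + b * t) * \<bar>t\<bar>)"
proof -
  define m where "m = b / (2 * a)"
  define \<sigma> where "\<sigma> = sqrt (1 / (2 * a))"
  define c where "c = exp (b\<^sup>2 / (4 * a)) * sqrt (pi / a)"
  have c: "c > 0" and \<sigma>: "\<sigma> > 0"
    using assms by (simp_all add: c_def \<sigma>_def)
  have eq: "exp (- a * t\<^sup>2 + b * t) = c * normal_density m \<sigma> t" for t
    unfolding exp_quadratic_eq_normal_density[OF assms] c_def m_def \<sigma>_def ..
  show "integrable lborel (\<lambda>t. exp (- a * t\<^sup>2 + b * t))"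
    unfolding eq using \<sigma> by (intro integrable_mult_right integrable_normal_density)
  have "integrable lborel (\<lambda>t. c * (normal_density m \<sigma> t * \<bar>t - m\<bar> ^ 1 + normal_density m \<sigma> t * \<bar>m\<bar>))"
    using \<sigma> by (intro integrable_mult_right Bochner_Integration.integrable_add
        integrable_normal_moment_abs integrable_mult_left integrable_normal_density)
  then show "integrable lborel (\<lambda>t. exp (- a * t\<^sup>2 + b * t) * \<bar>t\<bar>)"
  proof (rule Bochner_Integration.integrable_bound)
    show "AE t in lborel. norm (exp (- a * t\<^sup>2 + b * t) * \<bar>t\<bar>)
        \<le> norm (c * (normal_density m \<sigma> t * \<bar>t - m\<bar> ^ 1 + normal_density m \<sigma> t * \<bar>m\<bar>))"
    proof (rule AE_I2)
      fix t
      have "c * (normal_density m \<sigma> t * \<bar>t\<bar>) \<le> c * (normal_density m \<sigma> t * \<bar>t - m\<bar> + normal_density m \<sigma> t * \<bar>m\<bar>)"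
        using c by (intro mult_left_mono) (auto simp flip: distrib_left intro!: mult_left_mono)
      then show "norm (exp (- a * t\<^sup>2 + b * t) * \<bar>t\<bar>)
          \<le> norm (c * (normal_density m \<sigma> t * \<bar>t - m\<bar> ^ 1 + normal_density m \<sigma> t * \<bar>m\<bar>))"
        unfolding eq using c by (simp add: abs_mult mult.assoc)
    qed
  qed simp
qed

lemma
  assumes "a > 0"
  shows integrable_cgauss: "integrable lborel (cgauss a B)"
    and integrable_mult_cgauss: "integrable lborel (\<lambda>t. complex_of_real t * cgauss a B t)"
  by (rule Bochner_Integration.integrable_bound[OF integrable_exp_quadratic[OF assms, of "Re B"]]
      Bochner_Integration.integrable_bound[OF integrable_exp_quadratic_mult_abs[OF assms, of "Re B"]];
      simp add: norm_cgauss cgauss_def[abs_def] norm_mult)+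

lemma cgauss_has_vector_derivative:
  "(cgauss a B has_vector_derivative (complex_of_real (- 2 * a * t) + B) * cgauss a B t) (at t)"
proof -
  have "((\<lambda>z. exp (- complex_of_real a * z\<^sup>2 + B * z)) has_field_derivative
      (- complex_of_real a * (2 * complex_of_real t) + B) * exp (- complex_of_real a * (complex_of_real t)\<^sup>2 + B * complex_of_real t))
      (at (complex_of_real t))"
    by (auto intro!: derivative_eq_intros)
  from has_vector_derivative_real_field[OF this] show ?thesis
    unfolding cgauss_def by (simp add: algebra_simps)
qed

lemma cgauss_tendsto_0:
  assumes "a > 0"
  shows "(cgauss a B \<longlongrightarrow> 0) at_top" and "(cgauss a B \<longlongrightarrow> 0) at_bot"
proof -
  have "((\<lambda>t. exp (- a * t\<^sup>2 + Re B * t)) \<longlongrightarrow> 0) at_top"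
    and "((\<lambda>t. exp (- a * t\<^sup>2 + Re B * t)) \<longlongrightarrow> 0) at_bot"
    using assms by real_asymp+
  then show "(cgauss a B \<longlongrightarrow> 0) at_top" and "(cgauss a B \<longlongrightarrow> 0) at_bot"
    by (subst tendsto_norm_zero_iff[symmetric], simp add: norm_cgauss)+
qed

lemma integral_cgauss_derivative:
  assumes "a > 0"
  shows "(\<integral>t. (complex_of_real (- 2 * a * t) + B) * cgauss a B t \<partial>lborel) = 0"
proof -
  let ?f = "\<lambda>t. (complex_of_real (- 2 * a * t) + B) * cgauss a B t"
  have "integrable lborel (\<lambda>t. complex_of_real (- 2 * a) * (complex_of_real t * cgauss a B t) + B * cgauss a B t)"
    using integrable_cgauss[OF assms] integrable_mult_cgauss[OF assms] by (intro Bochner_Integration.integrable_add integrable_mult_right)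
  then have "integrable lborel ?f"
    by (simp add: algebra_simps)
  then have "(LBINT t=-\<infinity>..\<infinity>. ?f t) = 0 - 0"
    using cgauss_tendsto_0[OF assms]
    by (intro interval_integral_FTC_integrable[where F = "cgauss a B"] cgauss_has_vector_derivative)
       (auto simp: set_integrable_def cgauss_def ereal_tendsto_simps intro!: continuous_intros)
  then show ?thesis
    by (simp add: interval_lebesgue_integral_def set_lebesgue_integral_def)
qed

lemma integral_mult_cgauss:
  assumes "a > 0"
  shows "(\<integral>t. complex_of_real t * cgauss a B t \<partial>lborel) = B / complex_of_real (2 * a) * integral\<^sup>L lborel (cgauss a B)"
proof -
  have "0 = (\<integral>t. complex_of_real (- 2 * a) * (complex_of_real t * cgauss a B t) + B * cgauss a B t \<partial>lborel)"
    using integral_cgauss_derivative[OF assms, of B] by (simp add: algebra_simps)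
  also have "\<dots> = complex_of_real (- 2 * a) * (\<integral>t. complex_of_real t * cgauss a B t \<partial>lborel) + B * integral\<^sup>L lborel (cgauss a B)"
    using integrable_cgauss[OF assms] integrable_mult_cgauss[OF assms] by simp
  finally show ?thesis
    using assms by (simp add: field_simps)
qed

lemma integral_cgauss_imaginary:
  assumes "a > 0"
  shows "integral\<^sup>L lborel (cgauss a (\<i> * complex_of_real w)) = complex_of_real (sqrt (pi / a) * exp (- w\<^sup>2 / (4 * a)))"
proof -
  define c where "c = 1 / sqrt (2 * a)"
  have c: "c > 0" "c\<^sup>2 = 1 / (2 * a)"
    using assms by (simp_all add: c_def power_divide)
  have "char std_normal_distribution (w * c) = complex_of_real (exp (- (w * c)\<^sup>2 / 2))"
    by (simp add: char_std_normal_distribution)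
  then have char: "(\<integral>t. std_normal_density t *\<^sub>R iexp (w * c * t) \<partial>lborel) = complex_of_real (exp (- (w * c)\<^sup>2 / 2))"
    unfolding char_def by (subst (asm) integral_density) auto
  have scaled: "cgauss a (\<i> * complex_of_real w) (0 + c * t) = complex_of_real (sqrt (2 * pi)) * (std_normal_density t *\<^sub>R iexp (w * c * t))" for t
  proof -
    have e: "- a * (0 + c * t)\<^sup>2 = - t\<^sup>2 / 2"
      using assms c by (simp add: power_mult_distrib field_simps)
    have "cgauss a (\<i> * complex_of_real w) (0 + c * t) =
        exp (complex_of_real (- t\<^sup>2 / 2) + \<i> * complex_of_real (w * c * t))"
      unfolding cgauss_def e by (simp add: ac_simps)
    also have "\<dots> = complex_of_real (exp (- t\<^sup>2 / 2)) * iexp (w * c * t)"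
      by (simp only: exp_add exp_of_real)
    finally have "cgauss a (\<i> * complex_of_real w) (0 + c * t) = complex_of_real (exp (- t\<^sup>2 / 2)) * iexp (w * c * t)" .
    then show ?thesis
      by (simp add: std_normal_density_def scaleR_conv_of_real)
  qed
  have "integral\<^sup>L lborel (cgauss a (\<i> * complex_of_real w)) = \<bar>c\<bar> *\<^sub>R (\<integral>t. cgauss a (\<i> * complex_of_real w) (0 + c * t) \<partial>lborel)"
    using c by (intro lborel_integral_real_affine) simp
  also have "\<dots> = c *\<^sub>R (complex_of_real (sqrt (2 * pi)) * complex_of_real (exp (- (w * c)\<^sup>2 / 2)))"
    unfolding scaled integral_mult_right_zero char using c by simp
  also have "\<dots> = complex_of_real (sqrt (pi / a) * exp (- w\<^sup>2 / (4 * a)))"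
  proof -
    have "c * sqrt (2 * pi) = sqrt (pi / a)"
      using assms by (simp add: c_def real_sqrt_divide real_sqrt_mult field_simps)
    moreover have "- (w * c)\<^sup>2 / 2 = - w\<^sup>2 / (4 * a)"
      using c assms by (simp add: power_mult_distrib field_simps)
    ultimately show ?thesis
      by (simp add: scaleR_conv_of_real flip: mult.assoc of_real_mult)
  qed
  finally show ?thesis .
qed

lemma
  fixes f :: "'a::euclidean_space \<Rightarrow> real \<Rightarrow> 'b::{real_normed_field,banach,second_countable_topology}"
  assumes "\<And>b. b \<in> Basis \<Longrightarrow> integrable lborel (f b)"
  shows integrable_prod_Basis: "integrable lborel (\<lambda>u::'a. \<Prod>b\<in>Basis. f b (u \<bullet> b))"
    and integral_prod_Basis: "(\<integral>u. (\<Prod>b\<in>Basis. f b (u \<bullet> b)) \<partial>lborel) = (\<Prod>b\<in>Basis. integral\<^sup>L lborel (f b))"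
proof -
  interpret product_sigma_finite "\<lambda>_::'a. lborel :: real measure" ..
  let ?T = "\<lambda>g. \<Sum>b\<in>(Basis::'a set). g b *\<^sub>R b"
  have T: "?T \<in> measurable (Pi\<^sub>M Basis (\<lambda>_. lborel)) borel"
    by measurable
  have f: "b \<in> Basis \<Longrightarrow> f b \<in> borel_measurable borel" for b
    using assms[of b] by auto
  have prod: "(\<lambda>u::'a. \<Prod>b\<in>Basis. f b (u \<bullet> b)) \<in> borel_measurable lborel"
    using f by (auto intro!: borel_measurable_prod intro: measurable_compose[OF _ f])
  have coord: "(\<Prod>b\<in>Basis. f b (?T g \<bullet> b)) = (\<Prod>b\<in>Basis. f b (g b))" for g :: "'a \<Rightarrow> real"
    by (intro prod.cong refl) (simp add: inner_sum_left inner_Basis if_distrib sum.delta cong: if_cong)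
  show "integrable lborel (\<lambda>u::'a. \<Prod>b\<in>Basis. f b (u \<bullet> b))"
    using prod unfolding lborel_eq[where 'a='a]
    by (subst integrable_distr_eq[OF T]) (auto simp: coord intro!: product_integrable_prod assms)
  show "(\<integral>u. (\<Prod>b\<in>Basis. f b (u \<bullet> b)) \<partial>lborel) = (\<Prod>b\<in>Basis. integral\<^sup>L lborel (f b))"
    using prod unfolding lborel_eq[where 'a='a]
    by (subst integral_distr[OF T]) (auto simp: coord intro!: product_integral_prod assms)
qed

definition gaussian :: "real \<Rightarrow> ('a \<Rightarrow> complex) \<Rightarrow> 'a::euclidean_space \<Rightarrow> complex" where
  "gaussian a B u = (\<Prod>b\<in>Basis. cgauss a (B b) (u \<bullet> b))"

lemma complex_of_real_inner: "complex_of_real (u \<bullet> v) = (\<Sum>b\<in>Basis. complex_of_real (u \<bullet> b) * complex_of_real (v \<bullet> b))"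
  by (simp add: euclidean_inner[of u v] flip: of_real_mult of_real_sum)

lemma norm_sq_eq_sum_Basis: "(norm u)\<^sup>2 = (\<Sum>b\<in>Basis. (u \<bullet> b)\<^sup>2)"
  unfolding power2_norm_eq_inner by (subst euclidean_inner) (simp add: power2_eq_square)

lemma gaussian_eq_exp:
  "gaussian a B u = exp (complex_of_real (- a * (norm u)\<^sup>2) + (\<Sum>b\<in>Basis. B b * complex_of_real (u \<bullet> b)))"
proof -
  have "(\<Sum>b\<in>Basis. complex_of_real (- a * (u \<bullet> b)\<^sup>2) + B b * complex_of_real (u \<bullet> b))
      = complex_of_real (- a * (norm u)\<^sup>2) + (\<Sum>b\<in>Basis. B b * complex_of_real (u \<bullet> b))"
    by (simp only: sum.distrib sum_distrib_left of_real_sum norm_sq_eq_sum_Basis)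
  then show ?thesis
    unfolding gaussian_def cgauss_def exp_sum[OF finite_Basis, symmetric] by simp
qed

lemma gaussian_zero: "gaussian a (\<lambda>_. 0) u = complex_of_real (exp (- a * (norm u)\<^sup>2))"
  unfolding gaussian_eq_exp by (simp only: mult_zero_left sum.neutral_const add_0_right exp_of_real)

lemma integrable_gaussian:
  "a > 0 \<Longrightarrow> integrable lborel (gaussian a B :: 'a::euclidean_space \<Rightarrow> complex)"
  unfolding gaussian_def[abs_def] by (intro integrable_prod_Basis integrable_cgauss)

lemma gaussian_mult_inner_Basis:
  assumes "b0 \<in> Basis"
  shows "gaussian a B u * complex_of_real (u \<bullet> b0) =
    (\<Prod>b\<in>Basis. (if b = b0 then (\<lambda>t. complex_of_real t * cgauss a (B b) t) else cgauss a (B b)) (u \<bullet> b))"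
proof -
  have "(\<Prod>b\<in>Basis. (if b = b0 then (\<lambda>t. complex_of_real t * cgauss a (B b) t) else cgauss a (B b)) (u \<bullet> b))
     = complex_of_real (u \<bullet> b0) * cgauss a (B b0) (u \<bullet> b0) * (\<Prod>b\<in>Basis - {b0}. cgauss a (B b) (u \<bullet> b))"
    using assms by (subst prod.remove[of _ b0]) (auto intro!: prod.cong)
  moreover have "gaussian a B u = cgauss a (B b0) (u \<bullet> b0) * (\<Prod>b\<in>Basis - {b0}. cgauss a (B b) (u \<bullet> b))"
    unfolding gaussian_def using assms by (subst prod.remove[of _ b0]) auto
  ultimately show ?thesis
    by simp
qed

lemma
  fixes B :: "'a::euclidean_space \<Rightarrow> complex"
  assumes "a > 0" and "b0 \<in> Basis"
  shows integrable_gaussian_mult_inner_Basis: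
      "integrable lborel (\<lambda>u::'a. gaussian a B u * complex_of_real (u \<bullet> b0))"
    and integral_gaussian_mult_inner_Basis:
      "(\<integral>u. gaussian a B u * complex_of_real (u \<bullet> b0) \<partial>lborel) = B b0 / complex_of_real (2 * a) * integral\<^sup>L lborel (gaussian a B)"
proof -
  let ?f = "\<lambda>b. if b = b0 then (\<lambda>t. complex_of_real t * cgauss a (B b) t) else cgauss a (B b)"
  have f: "integrable lborel (?f b)" for b
    using integrable_cgauss[OF assms(1)] integrable_mult_cgauss[OF assms(1)] by simp
  show "integrable lborel (\<lambda>u::'a. gaussian a B u * complex_of_real (u \<bullet> b0))"
    unfolding gaussian_mult_inner_Basis[OF assms(2)] by (rule integrable_prod_Basis[OF f])
  have "(\<integral>u. gaussian a B u * complex_of_real (u \<bullet> b0) \<partial>lborel) = (\<Prod>b\<in>Basis. integral\<^sup>L lborel (?f b))"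
    unfolding gaussian_mult_inner_Basis[OF assms(2)] by (rule integral_prod_Basis[OF f])
  also have "\<dots> = integral\<^sup>L lborel (\<lambda>t. complex_of_real t * cgauss a (B b0) t) * (\<Prod>b\<in>Basis - {b0}. integral\<^sup>L lborel (cgauss a (B b)))"
    using assms by (subst prod.remove[of _ b0]) (auto intro!: prod.cong)
  also have "\<dots> = B b0 / complex_of_real (2 * a) * (integral\<^sup>L lborel (cgauss a (B b0)) * (\<Prod>b\<in>Basis - {b0}. integral\<^sup>L lborel (cgauss a (B b))))"
    unfolding integral_mult_cgauss[OF assms(1)] by simp
  also have "integral\<^sup>L lborel (cgauss a (B b0)) * (\<Prod>b\<in>Basis - {b0}. integral\<^sup>L lborel (cgauss a (B b))) = integral\<^sup>L lborel (gaussian a B)"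
    unfolding gaussian_def[abs_def] using assms
    by (subst integral_prod_Basis) (auto intro: integrable_cgauss simp: prod.remove[of _ b0])
  finally show "(\<integral>u. gaussian a B u * complex_of_real (u \<bullet> b0) \<partial>lborel) = B b0 / complex_of_real (2 * a) * integral\<^sup>L lborel (gaussian a B)" .
qed

lemma
  fixes B :: "'a::euclidean_space \<Rightarrow> complex"
  assumes "a > 0"
  shows integrable_gaussian_mult_inner: "integrable lborel (\<lambda>u::'a. gaussian a B u * complex_of_real (u \<bullet> v))"
    and integral_gaussian_mult_inner: "(\<integral>u. gaussian a B u * complex_of_real (u \<bullet> v) \<partial>lborel) =
      (\<Sum>b\<in>Basis. complex_of_real (v \<bullet> b) * B b) / complex_of_real (2 * a) * integral\<^sup>L lborel (gaussian a B)"
proof -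
  have expand: "gaussian a B u * complex_of_real (u \<bullet> v) =
      (\<Sum>b\<in>Basis. complex_of_real (v \<bullet> b) * (gaussian a B u * complex_of_real (u \<bullet> b)))" for u
    by (simp add: complex_of_real_inner[of u v] sum_distrib_left mult_ac)
  show "integrable lborel (\<lambda>u::'a. gaussian a B u * complex_of_real (u \<bullet> v))"
    unfolding expand by (intro Bochner_Integration.integrable_sum integrable_mult_right integrable_gaussian_mult_inner_Basis assms)
  have "(\<integral>u. gaussian a B u * complex_of_real (u \<bullet> v) \<partial>lborel) =
      (\<Sum>b\<in>Basis. complex_of_real (v \<bullet> b) * (\<integral>u. gaussian a B u * complex_of_real (u \<bullet> b) \<partial>lborel))"
    unfolding expand
    by (subst Bochner_Integration.integral_sum)
       (auto intro: integrable_mult_right integrable_gaussian_mult_inner_Basis[OF assms])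
  also have "\<dots> = (\<Sum>b\<in>Basis. complex_of_real (v \<bullet> b) * (B b / complex_of_real (2 * a) * integral\<^sup>L lborel (gaussian a B)))"
    using assms by (intro sum.cong refl) (simp add: integral_gaussian_mult_inner_Basis)
  finally show "(\<integral>u. gaussian a B u * complex_of_real (u \<bullet> v) \<partial>lborel) =
      (\<Sum>b\<in>Basis. complex_of_real (v \<bullet> b) * B b) / complex_of_real (2 * a) * integral\<^sup>L lborel (gaussian a B)"
    by (simp add: sum_distrib_left sum_divide_distrib algebra_simps)
qed

lemma integral_gaussian_imaginary:
  "a > 0 \<Longrightarrow> integral\<^sup>L lborel (gaussian a (\<lambda>b. \<i> * complex_of_real (w b)) :: 'a::euclidean_space \<Rightarrow> complex)
     = (\<Prod>b\<in>Basis. complex_of_real (sqrt (pi / a) * exp (- (w b)\<^sup>2 / (4 * a))))"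
  unfolding gaussian_def[abs_def]
  by (subst integral_prod_Basis) (auto intro: integrable_cgauss simp: integral_cgauss_imaginary)

lemma
  assumes "a > 0"
  shows integrable_exp_neg_norm_sq: "integrable lborel (\<lambda>u::'a::euclidean_space. exp (- a * (norm u)\<^sup>2))"
    and integral_exp_neg_norm_sq: "integral\<^sup>L lborel (\<lambda>u::'a. exp (- a * (norm u)\<^sup>2)) = sqrt (pi / a) ^ DIM('a)"
proof -
  have "integrable lborel (\<lambda>u::'a. norm (gaussian a (\<lambda>_. 0) u))"
    by (intro integrable_norm integrable_gaussian assms)
  then show "integrable lborel (\<lambda>u::'a. exp (- a * (norm u)\<^sup>2))"
    by (simp add: gaussian_zero)
  have "complex_of_real (integral\<^sup>L lborel (\<lambda>u::'a. exp (- a * (norm u)\<^sup>2))) =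
      integral\<^sup>L lborel (gaussian a (\<lambda>b. \<i> * complex_of_real 0) :: 'a \<Rightarrow> complex)"
    by (simp add: gaussian_zero[abs_def])
  also have "\<dots> = complex_of_real (sqrt (pi / a) ^ DIM('a))"
    using integral_gaussian_imaginary[OF assms, of "\<lambda>_. 0"] by (simp add: prod_constant)
  finally show "integral\<^sup>L lborel (\<lambda>u::'a. exp (- a * (norm u)\<^sup>2)) = sqrt (pi / a) ^ DIM('a)"
    by (simp only: of_real_eq_iff)
qed

section \<open>Matrix-valued integrals\<close>

lemma integral_lborel_pair:
  fixes g :: "'a::euclidean_space \<times> 'b::euclidean_space \<Rightarrow> 'c::{banach,second_countable_topology}"
  assumes "integrable lborel g"
  shows "integral\<^sup>L lborel g = (\<integral>w. (\<integral>u. g (u, w) \<partial>lborel) \<partial>lborel)"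
proof -
  have "integrable (lborel \<Otimes>\<^sub>M lborel) (\<lambda>(u, w). g (u, w))"
    using assms by (simp add: lborel_prod)
  from lborel_pair.integral_snd[OF this] show ?thesis
    by (simp add: lborel_prod)
qed

lemma
  fixes h :: "'a::euclidean_space \<times> 'b::euclidean_space \<Rightarrow> 'c::{banach,second_countable_topology}"
  assumes "h \<in> borel_measurable borel"
  shows integral_lborel_swap: "(\<integral>p. h (snd p, fst p) \<partial>lborel) = integral\<^sup>L lborel h"
    and integrable_lborel_swap: "integrable lborel h \<Longrightarrow> integrable lborel (\<lambda>p. h (snd p, fst p))"
proof -
  have h: "h \<in> borel_measurable (lborel \<Otimes>\<^sub>M lborel)"
    using assms by (simp add: lborel_prod measurable_lborel2)
  have swap: "(\<lambda>p. h (snd p, fst p)) = (\<lambda>(x, y). h (y, x))"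
    by auto
  show "(\<integral>p. h (snd p, fst p) \<partial>lborel) = integral\<^sup>L lborel h"
    using lborel_pair.integral_product_swap[OF h] unfolding swap by (simp add: lborel_prod)
  assume "integrable lborel h"
  then have "integrable (lborel \<Otimes>\<^sub>M lborel) h"
    by (simp add: lborel_prod)
  from lborel_pair.integrable_product_swap[OF this] show "integrable lborel (\<lambda>p. h (snd p, fst p))"
    unfolding swap by (simp add: lborel_prod)
qed

lemma cscale_nth [simp]: "cscale c M $ i $ j = c * M $ i $ j"
  by (simp add: cscale_def)

lemma cscale_add_right: "cscale c (M + N) = cscale c M + cscale c N"
  by (simp add: vec_eq_iff distrib_left)

lemma cscale_scaleR: "cscale c (r *\<^sub>R M) = cscale (c * complex_of_real r) M"
  by (simp add: vec_eq_iff scaleR_conv_of_real[where 'a=complex] mult_ac)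

lemma cscale_sum: "cscale c (\<Sum>i\<in>I. M i) = (\<Sum>i\<in>I. cscale c (M i))"
  by (induction I rule: infinite_finite_induct) (simp_all add: vec_eq_iff cscale_add_right)

lemma bounded_linear_cscale_left: "bounded_linear (\<lambda>c. cscale c (M :: complex^'a::finite^'b::finite))"
proof -
  have "linear (\<lambda>c. cscale c M)"
    by (rule linearI) (simp_all add: vec_eq_iff distrib_right scaleR_conv_of_real[where 'a=complex])
  then show ?thesis
    by (simp add: linear_conv_bounded_linear)
qed

lemma matrix_mult_cscale_left: "cscale c (A :: complex^'m::finite^'n::finite) ** B = cscale c (A ** B)"
  by (simp add: matrix_matrix_mult_def vec_eq_iff sum_distrib_left mult.assoc)

lemma matrix_mult_cscale_right: "(A :: complex^'m::finite^'n::finite) ** cscale c B = cscale c (A ** B)"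
  by (simp add: matrix_matrix_mult_def vec_eq_iff sum_distrib_left mult_ac)

lemma matrix_add_rdistrib: "((A :: 'a::semiring_1^'m::finite^'n::finite) + B) ** C = A ** C + B ** C"
  by (simp add: matrix_matrix_mult_def vec_eq_iff distrib_right sum.distrib)

lemma integral_cscale_linear_shift:
  fixes \<phi> :: "'p \<Rightarrow> complex" and \<sigma> :: "'p \<Rightarrow> 'a::euclidean_space"
    and L :: "'a \<Rightarrow> complex^'c::finite^'r::finite"
  assumes L: "linear L" and "integrable M \<phi>"
    and moment_integrable: "\<And>b. b \<in> Basis \<Longrightarrow> integrable M (\<lambda>p. \<phi> p * complex_of_real (\<sigma> p \<bullet> b))"
    and moment: "\<And>b. b \<in> Basis \<Longrightarrow> (\<integral>p. \<phi> p * complex_of_real (\<sigma> p \<bullet> b) \<partial>M) = c * complex_of_real (v \<bullet> b)"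
  shows "(\<integral>p. cscale (\<phi> p) (L (x + \<sigma> p)) \<partial>M) = cscale (integral\<^sup>L M \<phi>) (L x) + cscale c (L v)"
proof -
  have expand: "cscale d (L y) = (\<Sum>b\<in>Basis. cscale (d * complex_of_real (y \<bullet> b)) (L b))" for d y
  proof -
    have "L y = (\<Sum>b\<in>Basis. (y \<bullet> b) *\<^sub>R L b)"
      by (subst euclidean_representation[of y, symmetric]) (simp add: linear_sum[OF L] linear_scale[OF L])
    then show ?thesis
      by (simp add: cscale_sum cscale_scaleR)
  qed
  let ?moment = "\<lambda>b p. cscale (\<phi> p * complex_of_real (\<sigma> p \<bullet> b)) (L b)"
  have "(\<integral>p. cscale (\<phi> p) (L (x + \<sigma> p)) \<partial>M) = (\<integral>p. cscale (\<phi> p) (L x) + (\<Sum>b\<in>Basis. ?moment b p) \<partial>M)"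
    by (simp add: linear_add[OF L] cscale_add_right expand[of _ "\<sigma> _"])
  also have "\<dots> = cscale (integral\<^sup>L M \<phi>) (L x) + (\<Sum>b\<in>Basis. cscale (c * complex_of_real (v \<bullet> b)) (L b))"
    using assms moment_integrable
    by (simp add: Bochner_Integration.integral_sum moment integrable_bounded_linear[OF bounded_linear_cscale_left]
        integral_bounded_linear[OF bounded_linear_cscale_left] Bochner_Integration.integrable_sum)
  finally show ?thesis
    by (simp add: expand[of c v])
qed

section \<open>A regularised oscillatory Gaussian integral\<close>

(* phase_mass and moment_ratio describe the integral of gaussian_phase.integrand and its first
   moment; they live outside the locale because they do not depend on rho. *)
definition phase_mass :: "real \<Rightarrow> real \<Rightarrow> real \<Rightarrow> 'a::euclidean_space \<Rightarrow> complex" where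
  "phase_mass eps s beta x =
    complex_of_real (sqrt (pi / eps) ^ DIM('a) * exp (- beta * (norm x)\<^sup>2)) *
    integral\<^sup>L lborel (gaussian (eps + s\<^sup>2 / (4 * eps) + beta) (\<lambda>b. complex_of_real (- 2 * beta * (x \<bullet> b))))"

definition moment_ratio :: "real \<Rightarrow> real \<Rightarrow> real \<Rightarrow> real" where
  "moment_ratio eps s beta = s * beta / (2 * eps\<^sup>2 + s\<^sup>2 / 2 + 2 * eps * beta)"

(* integrand is the regularised Moyal kernel times the Gaussian factor of K at x + snd p, with
   omega (u, w) written as u . rho w: rho = -J for A # K, and rho = J for K # A after swapping u, w. *)
locale gaussian_phase =
  fixes eps s beta :: real and x :: "'a::euclidean_space" and rho :: "'a \<Rightarrow> 'a"
  assumes eps_pos: "0 < eps" and beta_pos: "0 < beta" and s_nonzero: "s \<noteq> 0"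
    and orthogonal_rho: "orthogonal_transformation rho"
begin

definition integrand :: "'a \<times> 'a \<Rightarrow> complex" where
  "integrand p =
    complex_of_real (exp (- eps * ((norm (fst p))\<^sup>2 + (norm (snd p))\<^sup>2))) * cis (s * (fst p \<bullet> rho (snd p))) *
    complex_of_real (exp (- beta * (norm (x + snd p))\<^sup>2))"

abbreviation alpha :: real where
  "alpha \<equiv> eps + s\<^sup>2 / (4 * eps)"

lemma alpha_pos: "alpha > 0"
  using eps_pos by (simp add: add_pos_nonneg)

lemma integrand_eq_gaussian:
  "integrand (u, w) = complex_of_real (exp (- eps * (norm w)\<^sup>2) * exp (- beta * (norm (x + w))\<^sup>2)) *
    gaussian eps (\<lambda>b. \<i> * complex_of_real (s * (rho w \<bullet> b))) u"
proof -
  have "(\<Sum>b\<in>Basis. \<i> * complex_of_real (s * (rho w \<bullet> b)) * complex_of_real (u \<bullet> b)) = \<i> * complex_of_real (s * (u \<bullet> rho w))"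
    by (simp add: complex_of_real_inner[of u "rho w"] sum_distrib_left mult_ac)
  then have "gaussian eps (\<lambda>b. \<i> * complex_of_real (s * (rho w \<bullet> b))) u =
      complex_of_real (exp (- eps * (norm u)\<^sup>2)) * cis (s * (u \<bullet> rho w))"
    by (simp only: gaussian_eq_exp exp_add cis_conv_exp exp_of_real)
  moreover have "exp (- eps * ((norm u)\<^sup>2 + (norm w)\<^sup>2)) = exp (- eps * (norm u)\<^sup>2) * exp (- eps * (norm w)\<^sup>2)"
    by (simp add: distrib_left flip: exp_add)
  ultimately show ?thesis
    unfolding integrand_def fst_conv snd_conv by (simp only: of_real_mult ac_simps)
qed

lemma integral_integrand_fst:
  "(\<integral>u. integrand (u, w) \<partial>lborel) = complex_of_real (exp (- eps * (norm w)\<^sup>2) * exp (- beta * (norm (x + w))\<^sup>2) *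
     sqrt (pi / eps) ^ DIM('a) * exp (- s\<^sup>2 * (norm w)\<^sup>2 / (4 * eps)))"
proof -
  have "(\<Sum>b\<in>Basis. - (s * (rho w \<bullet> b))\<^sup>2 / (4 * eps)) = - s\<^sup>2 * (norm (rho w))\<^sup>2 / (4 * eps)"
    unfolding power_mult_distrib sum_divide_distrib[symmetric] sum_negf sum_distrib_left[symmetric]
      norm_sq_eq_sum_Basis by simp
  then have prod_eq: "(\<Prod>b\<in>Basis. sqrt (pi / eps) * exp (- (s * (rho w \<bullet> b))\<^sup>2 / (4 * eps)))
      = sqrt (pi / eps) ^ DIM('a) * exp (- s\<^sup>2 * (norm w)\<^sup>2 / (4 * eps))"
    unfolding prod.distrib prod_constant exp_sum[OF finite_Basis, symmetric]
      orthogonal_transformation_norm[OF orthogonal_rho] by simp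
  show ?thesis
    unfolding integrand_eq_gaussian integral_mult_right_zero integral_gaussian_imaginary[OF eps_pos]
      of_real_prod[symmetric] prod_eq by (simp only: of_real_mult mult.assoc)
qed

lemma integral_integrand_fst_mult_inner:
  "(\<integral>u. integrand (u, w) * complex_of_real (u \<bullet> v) \<partial>lborel) =
    \<i> * complex_of_real s * complex_of_real (rho w \<bullet> v) / complex_of_real (2 * eps) * (\<integral>u. integrand (u, w) \<partial>lborel)"
proof -
  let ?B = "\<lambda>b. \<i> * complex_of_real (s * (rho w \<bullet> b))"
  let ?c = "complex_of_real (exp (- eps * (norm w)\<^sup>2) * exp (- beta * (norm (x + w))\<^sup>2))"
  have "(\<integral>u. integrand (u, w) * complex_of_real (u \<bullet> v) \<partial>lborel) =
      ?c * (\<integral>u. gaussian eps ?B u * complex_of_real (u \<bullet> v) \<partial>lborel)"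
    unfolding integrand_eq_gaussian by (simp add: mult.assoc)
  also have "\<dots> = ?c * ((\<Sum>b\<in>Basis. complex_of_real (v \<bullet> b) * ?B b) / complex_of_real (2 * eps) * integral\<^sup>L lborel (gaussian eps ?B))"
    by (simp only: integral_gaussian_mult_inner[OF eps_pos])
  also have "(\<Sum>b\<in>Basis. complex_of_real (v \<bullet> b) * ?B b) = \<i> * complex_of_real s * complex_of_real (rho w \<bullet> v)"
    by (simp add: complex_of_real_inner[of "rho w" v] sum_distrib_left mult_ac)
  finally show ?thesis
    unfolding integrand_eq_gaussian integral_mult_right_zero by (simp add: algebra_simps)
qed

lemma integral_integrand_fst_eq_gaussian:
  "(\<integral>u. integrand (u, w) \<partial>lborel) = complex_of_real (sqrt (pi / eps) ^ DIM('a) * exp (- beta * (norm x)\<^sup>2)) *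
     gaussian (alpha + beta) (\<lambda>b. complex_of_real (- 2 * beta * (x \<bullet> b))) w"
proof -
  have "(norm (x + w))\<^sup>2 = (norm x)\<^sup>2 + 2 * (x \<bullet> w) + (norm w)\<^sup>2"
    by (simp add: power2_norm_eq_inner inner_add_left inner_add_right inner_commute)
  then have exponent: "- eps * (norm w)\<^sup>2 + - beta * (norm (x + w))\<^sup>2 + - s\<^sup>2 * (norm w)\<^sup>2 / (4 * eps)
     = - beta * (norm x)\<^sup>2 + (- (alpha + beta) * (norm w)\<^sup>2 + - 2 * beta * (x \<bullet> w))"
    using eps_pos by (simp add: field_simps)
  have "exp (- eps * (norm w)\<^sup>2) * exp (- beta * (norm (x + w))\<^sup>2) * sqrt (pi / eps) ^ DIM('a) * exp (- s\<^sup>2 * (norm w)\<^sup>2 / (4 * eps))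
     = sqrt (pi / eps) ^ DIM('a) * exp (- eps * (norm w)\<^sup>2 + - beta * (norm (x + w))\<^sup>2 + - s\<^sup>2 * (norm w)\<^sup>2 / (4 * eps))"
    by (simp only: exp_add mult_ac)
  also have "\<dots> = sqrt (pi / eps) ^ DIM('a) * exp (- beta * (norm x)\<^sup>2) * exp (- (alpha + beta) * (norm w)\<^sup>2 + - 2 * beta * (x \<bullet> w))"
    unfolding exponent exp_add by (simp only: mult_ac)
  finally have real_eq: "exp (- eps * (norm w)\<^sup>2) * exp (- beta * (norm (x + w))\<^sup>2) * sqrt (pi / eps) ^ DIM('a) * exp (- s\<^sup>2 * (norm w)\<^sup>2 / (4 * eps))
     = sqrt (pi / eps) ^ DIM('a) * exp (- beta * (norm x)\<^sup>2) * exp (- (alpha + beta) * (norm w)\<^sup>2 + - 2 * beta * (x \<bullet> w))" .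
  have "(\<Sum>b\<in>Basis. complex_of_real (- 2 * beta * (x \<bullet> b)) * complex_of_real (w \<bullet> b))
      = complex_of_real (- 2 * beta * (x \<bullet> w))"
    by (simp add: complex_of_real_inner[of x w] sum_distrib_left sum_negf mult.assoc)
  then have "gaussian (alpha + beta) (\<lambda>b. complex_of_real (- 2 * beta * (x \<bullet> b))) w
      = complex_of_real (exp (- (alpha + beta) * (norm w)\<^sup>2 + - 2 * beta * (x \<bullet> w)))"
    by (simp only: gaussian_eq_exp of_real_add[symmetric] exp_of_real)
  then show ?thesis
    unfolding integral_integrand_fst real_eq by (simp only: of_real_mult)
qed
lemma norm_integrand_le: "norm (integrand p) \<le> norm (gaussian eps (\<lambda>_. 0) p)"
proof -
  have "norm (integrand p) = exp (- eps * ((norm (fst p))\<^sup>2 + (norm (snd p))\<^sup>2)) * exp (- beta * (norm (x + snd p))\<^sup>2)"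
    unfolding integrand_def by (simp add: norm_mult)
  also have "\<dots> \<le> exp (- eps * ((norm (fst p))\<^sup>2 + (norm (snd p))\<^sup>2))"
    using beta_pos by (simp add: mult_le_one)
  finally show ?thesis
    by (cases p) (simp add: gaussian_zero norm_Pair)
qed

lemma continuous_integrand: "continuous_on UNIV integrand"
proof -
  have "bounded_linear rho"
    using orthogonal_transformation_linear[OF orthogonal_rho] by (simp add: linear_conv_bounded_linear)
  then have "continuous_on UNIV rho"
    by (rule linear_continuous_on)
  then show ?thesis
    unfolding integrand_def[abs_def] by (intro continuous_intros continuous_on_compose2[OF \<open>continuous_on UNIV rho\<close>]) auto
qed

lemma integrand_measurable [measurable]: "integrand \<in> borel_measurable borel"
  by (rule borel_measurable_continuous_onI[OF continuous_integrand])

lemma integrand_mult_inner_measurable [measurable]: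
  "(\<lambda>p. integrand p * complex_of_real (fst p \<bullet> v)) \<in> borel_measurable borel"
  by (intro borel_measurable_continuous_onI continuous_intros continuous_integrand)

lemma integrable_integrand: "integrable lborel integrand"
  by (rule Bochner_Integration.integrable_bound[OF integrable_gaussian[OF eps_pos, of "\<lambda>_. 0"]])
     (auto intro: norm_integrand_le)

lemma integrable_integrand_mult_inner: "integrable lborel (\<lambda>p. integrand p * complex_of_real (fst p \<bullet> v))"
proof (rule Bochner_Integration.integrable_bound[OF integrable_gaussian_mult_inner[OF eps_pos, of "\<lambda>_. 0" "(v, 0)"]])
  show "AE p in lborel. norm (integrand p * complex_of_real (fst p \<bullet> v)) \<le> norm (gaussian eps (\<lambda>_. 0) p * complex_of_real (p \<bullet> (v, 0)))"
    using norm_integrand_le by (auto simp: norm_mult inner_Pair_0 intro!: mult_right_mono)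
qed (simp add: measurable_lborel2)

lemma integral_integrand: "integral\<^sup>L lborel integrand = phase_mass eps s beta x"
  unfolding integral_lborel_pair[OF integrable_integrand] integral_integrand_fst_eq_gaussian phase_mass_def
  by simp

lemma neg_moment_ratio_eq: "- moment_ratio eps s beta = s / (2 * eps) * (- 2 * beta / (2 * (alpha + beta)))"
proof -
  have ratio: "s / (2 * eps) * (- 2 * beta / (2 * a)) = - (s * beta / (2 * eps * a))" if "a > 0" for a
    using that eps_pos by (simp add: field_simps)
  have denominator: "2 * eps * (alpha + beta) = 2 * eps\<^sup>2 + s\<^sup>2 / 2 + 2 * eps * beta"
    using eps_pos by (simp add: field_simps power2_eq_square)
  have "s / (2 * eps) * (- 2 * beta / (2 * (alpha + beta))) = - (s * beta / (2 * eps * (alpha + beta)))"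
    by (rule ratio) (use alpha_pos beta_pos in simp)
  from this[unfolded denominator] show ?thesis
    unfolding moment_ratio_def by linarith
qed

lemma integral_integrand_mult_inner:
  "(\<integral>p. integrand p * complex_of_real (fst p \<bullet> v) \<partial>lborel) =
    - \<i> * complex_of_real (moment_ratio eps s beta * (rho x \<bullet> v)) * phase_mass eps s beta x"
proof -
  let ?B = "\<lambda>b. complex_of_real (- 2 * beta * (x \<bullet> b))"
  let ?C = "complex_of_real (sqrt (pi / eps) ^ DIM('a) * exp (- beta * (norm x)\<^sup>2))"
  let ?v = "adjoint rho v"
  have adjoint: "rho w \<bullet> v = w \<bullet> ?v" for w
    using adjoint_works[OF orthogonal_transformation_linear[OF orthogonal_rho]] by simp
  have "(\<integral>p. integrand p * complex_of_real (fst p \<bullet> v) \<partial>lborel)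
      = (\<integral>w. \<i> * complex_of_real s / complex_of_real (2 * eps) * ?C * (gaussian (alpha + beta) ?B w * complex_of_real (w \<bullet> ?v)) \<partial>lborel)"
    unfolding integral_lborel_pair[OF integrable_integrand_mult_inner] fst_conv
      integral_integrand_fst_mult_inner integral_integrand_fst_eq_gaussian adjoint
    by (simp add: algebra_simps)
  also have "\<dots> = \<i> * complex_of_real s / complex_of_real (2 * eps) * ?C *
      ((\<Sum>b\<in>Basis. complex_of_real (?v \<bullet> b) * ?B b) / complex_of_real (2 * (alpha + beta)) * integral\<^sup>L lborel (gaussian (alpha + beta) ?B))"
    using alpha_pos beta_pos by (simp add: integral_gaussian_mult_inner)
  also have "(\<Sum>b\<in>Basis. complex_of_real (?v \<bullet> b) * ?B b) = complex_of_real (- 2 * beta * (rho x \<bullet> v))"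
    by (simp add: complex_of_real_inner[of x ?v] adjoint sum_distrib_left sum_negf mult_ac)
  also have "\<i> * complex_of_real s / complex_of_real (2 * eps) * ?C *
      (complex_of_real (- 2 * beta * (rho x \<bullet> v)) / complex_of_real (2 * (alpha + beta)) * integral\<^sup>L lborel (gaussian (alpha + beta) ?B))
      = \<i> * complex_of_real (- moment_ratio eps s beta * (rho x \<bullet> v)) * phase_mass eps s beta x"
    unfolding phase_mass_def neg_moment_ratio_eq by (simp only: of_real_mult of_real_divide of_real_inverse divide_inverse mult_ac)
  finally show ?thesis
    by simp
qed

lemma norm_phase_mass_le: "norm (phase_mass eps s beta x) \<le> (2 * pi / \<bar>s\<bar>) ^ DIM('a)"
proof -
  define g where "g = s\<^sup>2 / (4 * eps)"
  have g: "g > 0"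
    using s_nonzero eps_pos by (simp add: g_def)
  have "norm (phase_mass eps s beta x) \<le> (\<integral>w. norm (\<integral>u. integrand (u, w) \<partial>lborel) \<partial>lborel)"
    unfolding integral_integrand[symmetric] integral_lborel_pair[OF integrable_integrand]
    by (rule integral_norm_bound)
  also have "\<dots> \<le> integral\<^sup>L lborel (\<lambda>w::'a. sqrt (pi / eps) ^ DIM('a) * exp (- g * (norm w)\<^sup>2))"
  proof (rule integral_mono)
    show "integrable lborel (\<lambda>w. norm (\<integral>u. integrand (u, w) \<partial>lborel))"
      unfolding integral_integrand_fst_eq_gaussian
      using alpha_pos beta_pos by (intro integrable_norm integrable_mult_right integrable_gaussian) simp
    show "integrable lborel (\<lambda>w::'a. sqrt (pi / eps) ^ DIM('a) * exp (- g * (norm w)\<^sup>2))"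
      by (intro integrable_mult_right integrable_exp_neg_norm_sq g)
    fix w :: 'a
    have "norm (\<integral>u. integrand (u, w) \<partial>lborel) =
        (exp (- eps * (norm w)\<^sup>2) * exp (- beta * (norm (x + w))\<^sup>2)) * (sqrt (pi / eps) ^ DIM('a) * exp (- g * (norm w)\<^sup>2))"
      unfolding integral_integrand_fst g_def using eps_pos by (simp add: abs_mult norm_mult norm_power)
    also have "\<dots> \<le> 1 * (sqrt (pi / eps) ^ DIM('a) * exp (- g * (norm w)\<^sup>2))"
      using eps_pos beta_pos by (intro mult_right_mono mult_le_one) auto
    finally show "norm (\<integral>u. integrand (u, w) \<partial>lborel) \<le> sqrt (pi / eps) ^ DIM('a) * exp (- g * (norm w)\<^sup>2)"
      by simp
  qed
  also have "\<dots> = sqrt (pi / eps) ^ DIM('a) * sqrt (pi / g) ^ DIM('a)"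
    unfolding integral_mult_right_zero integral_exp_neg_norm_sq[OF g] ..
  also have "\<dots> = (2 * pi / \<bar>s\<bar>) ^ DIM('a)"
  proof -
    have "sqrt (pi / eps) * sqrt (pi / g) = sqrt ((2 * pi / \<bar>s\<bar>)\<^sup>2)"
      unfolding real_sqrt_mult[symmetric] g_def using eps_pos s_nonzero
      by (simp add: field_simps power2_eq_square)
    then show ?thesis
      by (simp flip: power_mult_distrib)
  qed
  finally show ?thesis .
qed

lemma integral_cscale_integrand:
  assumes "linear L"
  shows "(\<integral>p. cscale (integrand p) (L (x + fst p)) \<partial>lborel) =
    cscale (phase_mass eps s beta x) (L x) + cscale (- \<i> * complex_of_real (moment_ratio eps s beta) * phase_mass eps s beta x) (L (rho x))"
  unfolding integral_integrand[symmetric]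
  by (rule integral_cscale_linear_shift[OF assms integrable_integrand integrable_integrand_mult_inner])
     (simp add: integral_integrand_mult_inner integral_integrand)

lemma integral_cscale_integrand_swap:
  assumes "linear L"
  shows "(\<integral>p. cscale (integrand (snd p, fst p)) (L (x + snd p)) \<partial>lborel) =
    cscale (phase_mass eps s beta x) (L x) + cscale (- \<i> * complex_of_real (moment_ratio eps s beta) * phase_mass eps s beta x) (L (rho x))"
proof -
  have "(\<integral>p. integrand (snd p, fst p) * complex_of_real (snd p \<bullet> b) \<partial>lborel) =
      (\<integral>p. integrand p * complex_of_real (fst p \<bullet> b) \<partial>lborel)" for b
    using integral_lborel_swap[OF integrand_mult_inner_measurable, of b] by simp
  moreover have "integrable lborel (\<lambda>p. integrand (snd p, fst p) * complex_of_real (snd p \<bullet> b))" for b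
    using integrable_lborel_swap[OF integrand_mult_inner_measurable integrable_integrand_mult_inner, of b] by simp
  moreover have "(\<integral>p. integrand (snd p, fst p) \<partial>lborel) = phase_mass eps s beta x"
    by (simp add: integral_lborel_swap[OF integrand_measurable] integral_integrand)
  ultimately show ?thesis
    using integral_cscale_linear_shift[OF assms integrable_lborel_swap[OF integrand_measurable integrable_integrand],
        where c = "- \<i> * complex_of_real (moment_ratio eps s beta) * phase_mass eps s beta x" and v = "rho x"]
    by (simp add: integral_integrand_mult_inner)
qed

end

section \<open>Clifford multiplication and the number operator\<close>

lemma linear_ext_mult: "linear ext_mult"
  by (rule linearI)
     (auto simp: ext_mult_def vec_eq_iff distrib_right scaleR_conv_of_real[where 'a=complex] sum.distrib[symmetric]
        sum_distrib_left if_distrib mult.assoc intro!: sum.cong)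

lemma linear_contr: "linear contr"
  by (rule linearI)
     (auto simp: contr_def vec_eq_iff distrib_right scaleR_conv_of_real[where 'a=complex] sum.distrib[symmetric]
        sum_distrib_left if_distrib mult.assoc intro!: sum.cong)

lemma linear_cliff: "linear cliff"
  unfolding cliff_def[abs_def] by (intro linear_compose_add linear_ext_mult linear_contr)

lemma linear_cliff_mult_right: "linear (\<lambda>z. cliff z ** Q)"
  by (rule linearI)
     (simp_all add: linear_add[OF linear_cliff] linear_scale[OF linear_cliff] matrix_add_rdistrib flip: scalar_matrix_assoc)

lemma linear_cliff_mult_left: "linear (\<lambda>z. Q ** cliff z)"
  by (rule linearI)
     (simp_all add: linear_add[OF linear_cliff] linear_scale[OF linear_cliff] matrix_add_ldistrib matrix_scalar_ac flip: scalar_matrix_assoc)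

lemma ext_mult_smult: "ext_mult (c *s z) = cscale c (ext_mult z)"
  by (simp add: ext_mult_def vec_eq_iff sum_distrib_left if_distrib mult.assoc cong: if_cong)

lemma contr_smult: "contr (c *s z) = cscale (cnj c) (contr z)"
  by (simp add: contr_def vec_eq_iff sum_distrib_left if_distrib mult.assoc cong: if_cong)

lemma mexp_diag_mult_nth: "(mexp_diag D ** A) $ T $ S = exp (D $ T $ T) * A $ T $ S"
proof -
  have "(\<Sum>k\<in>UNIV. (if T = k then exp (D $ k $ k) else 0) * A $ k $ S) = (\<Sum>k\<in>UNIV. if T = k then exp (D $ k $ k) * A $ k $ S else 0)"
    by (intro sum.cong) auto
  then show ?thesis
    by (simp add: matrix_matrix_mult_def mexp_diag_def)
qed

lemma mult_mexp_diag_nth: "(A ** mexp_diag D) $ T $ S = A $ T $ S * exp (D $ S $ S)"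
proof -
  have "(\<Sum>k\<in>UNIV. A $ T $ k * (if k = S then exp (D $ S $ S) else 0)) = (\<Sum>k\<in>UNIV. if k = S then A $ T $ k * exp (D $ S $ S) else 0)"
    by (intro sum.cong) auto
  then show ?thesis
    by (simp add: matrix_matrix_mult_def mexp_diag_def)
qed

lemma exp_Nop_insert:
  assumes "j \<notin> S"
  shows "exp (complex_of_real r * Nop $ insert j S $ insert j S) =
    complex_of_real (exp (2 * r)) * exp (complex_of_real r * (Nop :: complex^('n::finite set)^('n set)) $ S $ S)"
proof -
  have diag: "complex_of_real r * (Nop :: complex^('n set)^('n set)) $ T $ T = complex_of_real (r * (2 * real (card T) - real CARD('n)))" for T
    by (simp add: Nop_def)
  have "r * (2 * real (card (insert j S)) - real CARD('n)) = 2 * r + r * (2 * real (card S) - real CARD('n))"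
    using assms by (simp add: algebra_simps)
  then show ?thesis
    unfolding diag by (simp only: of_real_add exp_add exp_of_real)
qed

lemma exp_Nop_remove:
  assumes "j \<in> S"
  shows "exp (complex_of_real r * Nop $ (S - {j}) $ (S - {j})) =
    complex_of_real (exp (- 2 * r)) * exp (complex_of_real r * (Nop :: complex^('n::finite set)^('n set)) $ S $ S)"
  using exp_Nop_insert[of j "S - {j}" r] assms
  by (simp add: insert_absorb mult.assoc flip: of_real_mult exp_add)

lemma mexp_diag_Nop_ext_mult:
  "mexp_diag (r *\<^sub>R Nop) ** ext_mult (z :: complex^'n::{finite,linorder}) = exp (2 * r) *\<^sub>R (ext_mult z ** mexp_diag (r *\<^sub>R Nop))"
proof -
  have "exp (complex_of_real r * Nop $ T $ T) * ext_mult z $ T $ S =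
      complex_of_real (exp (2 * r)) * (ext_mult z $ T $ S * exp (complex_of_real r * Nop $ S $ S))" for T S
    unfolding ext_mult_def vec_lambda_beta sum_distrib_left sum_distrib_right
    by (intro sum.cong refl) (auto simp: exp_Nop_insert; simp only: mult_ac)
  then show ?thesis
    by (simp add: vec_eq_iff mexp_diag_mult_nth mult_mexp_diag_nth scaleR_conv_of_real[where 'a=complex])
qed

lemma mexp_diag_Nop_contr:
  "mexp_diag (r *\<^sub>R Nop) ** contr (z :: complex^'n::{finite,linorder}) = exp (- 2 * r) *\<^sub>R (contr z ** mexp_diag (r *\<^sub>R Nop))"
proof -
  have "exp (complex_of_real r * Nop $ T $ T) * contr z $ T $ S =
      complex_of_real (exp (- 2 * r)) * (contr z $ T $ S * exp (complex_of_real r * Nop $ S $ S))" for T S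
    unfolding contr_def vec_lambda_beta sum_distrib_left sum_distrib_right
    by (intro sum.cong refl) (auto simp: exp_Nop_remove; simp only: mult_ac)
  then show ?thesis
    by (simp add: vec_eq_iff mexp_diag_mult_nth mult_mexp_diag_nth scaleR_conv_of_real[where 'a=complex])
qed

lemma KN_ext_mult_commute: "KN lam tau v ** ext_mult z = exp (- 2 * (lam * tau)) *\<^sub>R (ext_mult z ** KN lam tau v)"
  unfolding KN_def matrix_scalar_ac scalar_matrix_assoc[symmetric] mexp_diag_Nop_ext_mult by simp

lemma KN_contr_commute: "KN lam tau v ** contr z = exp (2 * (lam * tau)) *\<^sub>R (contr z ** KN lam tau v)"
  unfolding KN_def matrix_scalar_ac scalar_matrix_assoc[symmetric] mexp_diag_Nop_contr by simp

lemma omega_eq_inner: "omega u w = u \<bullet> ((- \<i>) *s w)"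
  by (simp add: omega_def inner_vec_def inner_complex_def algebra_simps flip: sum_subtractf)

lemma omega_eq_inner_swap: "omega u w = w \<bullet> (\<i> *s u)"
  by (simp add: omega_def inner_vec_def inner_complex_def algebra_simps flip: sum_subtractf)

lemma orthogonal_transformation_smult:
  assumes "cmod c = 1"
  shows "orthogonal_transformation (\<lambda>w::complex^'n. c *s w)"
proof -
  have inner_eq: "z \<bullet> w = Re (cnj z * w)" for z w :: complex
    by (simp add: inner_complex_def)
  have "c * cnj c = 1"
    using complex_norm_square[of c] assms by simp
  then have cancel: "cnj (c * z) * (c * w) = cnj z * w" for z w
    by (simp add: mult.left_commute mult.assoc)
  have inner: "(c * z) \<bullet> (c * w) = z \<bullet> w" for z w
    unfolding inner_eq cancel ..
  have "linear (\<lambda>w::complex^'n. c *s w)"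
    by (rule linearI) (simp_all add: vector_add_ldistrib vec_eq_iff scaleR_conv_of_real[where 'a=complex] mult.left_commute)
  then show ?thesis
    unfolding orthogonal_transformation_def by (simp add: inner_vec_def inner)
qed

section \<open>Regularised Moyal products\<close>

lemma Bfun_mult_tendsto_0:
  fixes f g :: "'a \<Rightarrow> 'b::real_normed_algebra"
  shows "Bfun f F \<Longrightarrow> (g \<longlongrightarrow> 0) F \<Longrightarrow> ((\<lambda>x. f x * g x) \<longlongrightarrow> 0) F"
  using bounded_bilinear.Bfun_prod_Zfun[OF bounded_bilinear_mult, of f F g] by (simp add: tendsto_Zfun_iff)

lemma Lim_eq_if_diff_tendsto_0:
  fixes f g :: "'a \<Rightarrow> 'b::real_normed_vector"
  assumes "((\<lambda>e. f e - g e) \<longlongrightarrow> 0) F"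
  shows "Lim F f = Lim F g"
proof -
  have "(f \<longlongrightarrow> L) F \<longleftrightarrow> (g \<longlongrightarrow> L) F" for L
    using Lim_transform[of g L F f] Lim_transform2[of f L F g] assms by blast
  then show ?thesis
    unfolding t2_space_class.Lim_def by simp
qed

definition moyal_regularized :: "real \<Rightarrow> real \<Rightarrow> ('n::finite) symb \<Rightarrow> 'n symb \<Rightarrow> 'n symb" where
  "moyal_regularized lam eps a b x =
    (LINT p|lborel. cscale (complex_of_real (exp (- eps * ((norm (fst p))\<^sup>2 + (norm (snd p))\<^sup>2))) * cis (2 / lam * omega (fst p) (snd p)))
      (a (x + fst p) ** b (x + snd p)))"

lemma moyal_eq_Lim:
  "lam \<noteq> 0 \<Longrightarrow> moyal lam a b x = Lim (at_right 0) (\<lambda>eps. inverse ((lam * pi) ^ (2 * CARD('n))) *\<^sub>R moyal_regularized lam eps a b x)"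
  for a b :: "('n::finite) symb"
  by (simp add: moyal_def moyal_regularized_def)

lemma tanh_div_pos: "lam \<noteq> 0 \<Longrightarrow> 0 < tau \<Longrightarrow> 0 < tanh (lam * tau) / lam"
  for lam tau :: real
  by (cases "lam > 0") (simp_all add: divide_pos_pos divide_neg_neg tanh_real_neg_iff mult_neg_pos)

lemma KN_eq_scaleR_KN_0:
  "lam \<noteq> 0 \<Longrightarrow> KN lam tau v = exp (- (tanh (lam * tau) / lam) * (norm v)\<^sup>2) *\<^sub>R KN lam tau 0"
  by (simp add: KN_def Kfun_def)

lemma gaussian_phase_smult:
  "0 < eps \<Longrightarrow> 0 < beta \<Longrightarrow> s \<noteq> 0 \<Longrightarrow> cmod c = 1 \<Longrightarrow> gaussian_phase eps s beta (\<lambda>w::complex^'n. c *s w)"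
  by (simp add: gaussian_phase_def orthogonal_transformation_smult)

lemma moyal_regularized_cliff_KN:
  fixes x :: "complex^'n::{finite,linorder}"
  assumes lam: "lam \<noteq> 0" and "0 < tau" and "0 < eps"
  defines "beta \<equiv> tanh (lam * tau) / lam"
  shows "moyal_regularized lam eps (A_sym lam) (KN lam tau) x =
    cscale (phase_mass eps (2 / lam) beta x) (cliff x ** KN lam tau 0) +
    cscale (- \<i> * complex_of_real (moment_ratio eps (2 / lam) beta) * phase_mass eps (2 / lam) beta x)
      (cliff ((- \<i>) *s x) ** KN lam tau 0)"
proof -
  interpret gaussian_phase eps "2 / lam" beta x "\<lambda>w. (- \<i>) *s w"
    using assms tanh_div_pos by (intro gaussian_phase_smult) auto
  have pointwise: "cscale (complex_of_real (exp (- eps * ((norm (fst p))\<^sup>2 + (norm (snd p))\<^sup>2))) * cis (2 / lam * omega (fst p) (snd p)))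
      (A_sym lam (x + fst p) ** KN lam tau (x + snd p)) = cscale (integrand p) (cliff (x + fst p) ** KN lam tau 0)" for p
    unfolding KN_eq_scaleR_KN_0[OF lam, of tau "x + snd p"] A_sym_def matrix_scalar_ac
      scalar_matrix_assoc[symmetric] cscale_scaleR beta_def[symmetric] integrand_def omega_eq_inner
    by (simp add: mult_ac)
  have "moyal_regularized lam eps (A_sym lam) (KN lam tau) x = (\<integral>p. cscale (integrand p) (cliff (x + fst p) ** KN lam tau 0) \<partial>lborel)"
    unfolding moyal_regularized_def pointwise ..
  also have "\<dots> = cscale (phase_mass eps (2 / lam) beta x) (cliff x ** KN lam tau 0) +
      cscale (- \<i> * complex_of_real (moment_ratio eps (2 / lam) beta) * phase_mass eps (2 / lam) beta x)
        (cliff ((- \<i>) *s x) ** KN lam tau 0)"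
    by (rule integral_cscale_integrand[OF linear_cliff_mult_right])
  finally show ?thesis .
qed

lemma moyal_regularized_KN_cliff:
  fixes x :: "complex^'n::{finite,linorder}"
  assumes lam: "lam \<noteq> 0" and "0 < tau" and "0 < eps"
  defines "beta \<equiv> tanh (lam * tau) / lam"
  shows "moyal_regularized lam eps (KN lam tau) (A_sym lam) x =
    cscale (phase_mass eps (2 / lam) beta x) (KN lam tau 0 ** cliff x) +
    cscale (- \<i> * complex_of_real (moment_ratio eps (2 / lam) beta) * phase_mass eps (2 / lam) beta x)
      (KN lam tau 0 ** cliff (\<i> *s x))"
proof -
  interpret gaussian_phase eps "2 / lam" beta x "\<lambda>w. \<i> *s w"
    using assms tanh_div_pos by (intro gaussian_phase_smult) auto
  have pointwise: "cscale (complex_of_real (exp (- eps * ((norm (fst p))\<^sup>2 + (norm (snd p))\<^sup>2))) * cis (2 / lam * omega (fst p) (snd p)))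
      (KN lam tau (x + fst p) ** A_sym lam (x + snd p)) = cscale (integrand (snd p, fst p)) (KN lam tau 0 ** cliff (x + snd p))" for p
    unfolding KN_eq_scaleR_KN_0[OF lam, of tau "x + fst p"] A_sym_def scalar_matrix_assoc[symmetric]
      cscale_scaleR beta_def[symmetric] integrand_def omega_eq_inner_swap fst_conv snd_conv
    by (simp add: mult_ac add_ac)
  have "moyal_regularized lam eps (KN lam tau) (A_sym lam) x = (\<integral>p. cscale (integrand (snd p, fst p)) (KN lam tau 0 ** cliff (x + snd p)) \<partial>lborel)"
    unfolding moyal_regularized_def pointwise ..
  also have "\<dots> = cscale (phase_mass eps (2 / lam) beta x) (KN lam tau 0 ** cliff x) +
      cscale (- \<i> * complex_of_real (moment_ratio eps (2 / lam) beta) * phase_mass eps (2 / lam) beta x)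
        (KN lam tau 0 ** cliff (\<i> *s x))"
    by (rule integral_cscale_integrand_swap[OF linear_cliff_mult_left])
  finally show ?thesis .
qed

lemma cliff_KN_commutator:
  fixes x v :: "complex^'n::{finite,linorder}" and lam tau r :: real and P :: complex
  defines "Q \<equiv> KN lam tau v" and "\<theta> \<equiv> lam * tau"
  shows "cscale P (cliff x ** Q) + cscale (- \<i> * complex_of_real r * P) (cliff ((- \<i>) *s x) ** Q)
      - (cscale P (Q ** cliff x) + cscale (- \<i> * complex_of_real r * P) (Q ** cliff (\<i> *s x)))
    = cscale (P * complex_of_real ((1 - exp (- 2 * \<theta>)) - r * (1 + exp (- 2 * \<theta>)))) (ext_mult x ** Q)
      + cscale (P * complex_of_real ((1 - exp (2 * \<theta>)) + r * (1 + exp (2 * \<theta>)))) (contr x ** Q)"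
proof -
  let ?E = "ext_mult x ** Q" and ?C = "contr x ** Q"
  have cliff_Q: "cliff x ** Q = ?E + ?C"
    unfolding cliff_def by (rule matrix_add_rdistrib)
  have cliff_rot_Q: "cliff ((- \<i>) *s x) ** Q = cscale (- \<i>) ?E + cscale \<i> ?C"
    unfolding cliff_def matrix_add_rdistrib ext_mult_smult contr_smult matrix_mult_cscale_left by simp
  have Q_cliff: "Q ** cliff x = exp (- 2 * \<theta>) *\<^sub>R ?E + exp (2 * \<theta>) *\<^sub>R ?C"
    unfolding Q_def \<theta>_def cliff_def matrix_add_ldistrib KN_ext_mult_commute KN_contr_commute ..
  have Q_cliff_rot: "Q ** cliff (\<i> *s x) = cscale \<i> (exp (- 2 * \<theta>) *\<^sub>R ?E) + cscale (- \<i>) (exp (2 * \<theta>) *\<^sub>R ?C)"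
    unfolding Q_def \<theta>_def cliff_def matrix_add_ldistrib ext_mult_smult contr_smult matrix_mult_cscale_right
      KN_ext_mult_commute KN_contr_commute by simp
  show ?thesis
    unfolding cliff_Q cliff_rot_Q Q_cliff Q_cliff_rot
    by (simp add: vec_eq_iff scaleR_conv_of_real[where 'a=complex] algebra_simps)
qed

lemma one_minus_exp_eq_tanh_mult: "1 - exp (- 2 * t) = tanh t * (1 + exp (- 2 * t))"
  for t :: real
proof -
  have "1 + exp (- 2 * t) \<noteq> 0"
    using exp_gt_zero[of "- 2 * t"] by linarith
  then show ?thesis
    by (simp add: tanh_real_altdef)
qed

lemma exp_minus_one_eq_tanh_mult: "exp (2 * t) - 1 = tanh t * (1 + exp (2 * t))"
  for t :: real
  using one_minus_exp_eq_tanh_mult[of "- t"] by simp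

lemma tendsto_moment_ratio:
  assumes "s \<noteq> 0"
  shows "((\<lambda>eps. moment_ratio eps s beta) \<longlongrightarrow> 2 * beta / s) (at_right 0)"
proof -
  have "2 * beta / s = s * beta / (2 * 0\<^sup>2 + s\<^sup>2 / 2 + 2 * 0 * beta)"
    using assms by (simp add: field_simps power2_eq_square)
  also have "((\<lambda>eps. s * beta / (2 * eps\<^sup>2 + s\<^sup>2 / 2 + 2 * eps * beta)) \<longlongrightarrow> \<dots>) (at_right 0)"
    using assms by (intro tendsto_intros) simp_all
  finally show ?thesis
    unfolding moment_ratio_def .
qed

lemma moyal_regularized_commutator_tendsto_0:
  fixes x :: "complex^'n::{finite,linorder}"
  assumes lam: "lam \<noteq> 0" and tau: "0 < tau"
  shows "((\<lambda>eps. moyal_regularized lam eps (A_sym lam) (KN lam tau) x - moyal_regularized lam eps (KN lam tau) (A_sym lam) x) \<longlongrightarrow> 0) (at_right 0)"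
proof -
  define beta where "beta = tanh (lam * tau) / lam"
  define \<theta> where "\<theta> = lam * tau"
  define P where "P eps = phase_mass eps (2 / lam) beta x" for eps
  define r where "r eps = moment_ratio eps (2 / lam) beta" for eps
  define coeff_E where "coeff_E t = (1 - exp (- 2 * \<theta>)) - t * (1 + exp (- 2 * \<theta>))" for t
  define coeff_C where "coeff_C t = (1 - exp (2 * \<theta>)) + t * (1 + exp (2 * \<theta>))" for t
  have beta: "0 < beta"
    unfolding beta_def using lam tau by (rule tanh_div_pos)
  have pos: "\<forall>\<^sub>F eps in at_right (0::real). 0 < eps"
    by (simp add: eventually_at_right_less)
  have bounded: "Bfun P (at_right 0)"
  proof (rule BfunI)
    show "\<forall>\<^sub>F eps in at_right 0. norm (P eps) \<le> (2 * pi / \<bar>2 / lam\<bar>) ^ DIM(complex^'n::{finite,linorder})"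
      using pos
    proof eventually_elim
      case (elim eps)
      interpret gaussian_phase eps "2 / lam" beta x "\<lambda>w. w"
        using elim beta lam by unfold_locales simp_all
      show ?case
        unfolding P_def by (rule norm_phase_mass_le)
    qed
  qed
  have r: "(r \<longlongrightarrow> tanh \<theta>) (at_right 0)"
    using tendsto_moment_ratio[of "2 / lam" beta] lam unfolding r_def beta_def \<theta>_def by simp
  have "coeff_E (tanh \<theta>) = 0" and "coeff_C (tanh \<theta>) = 0"
    unfolding coeff_E_def coeff_C_def
    using one_minus_exp_eq_tanh_mult[of \<theta>] exp_minus_one_eq_tanh_mult[of \<theta>] by simp_all
  moreover have "((\<lambda>eps. coeff_E (r eps)) \<longlongrightarrow> coeff_E (tanh \<theta>)) (at_right 0)"
    and "((\<lambda>eps. coeff_C (r eps)) \<longlongrightarrow> coeff_C (tanh \<theta>)) (at_right 0)"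
    unfolding coeff_E_def coeff_C_def by (intro tendsto_intros r)+
  ultimately have "((\<lambda>eps. complex_of_real (coeff_E (r eps))) \<longlongrightarrow> 0) (at_right 0)"
    and "((\<lambda>eps. complex_of_real (coeff_C (r eps))) \<longlongrightarrow> 0) (at_right 0)"
    using tendsto_of_real by force+
  then have "((\<lambda>eps. P eps * complex_of_real (coeff_E (r eps))) \<longlongrightarrow> 0) (at_right 0)"
    and "((\<lambda>eps. P eps * complex_of_real (coeff_C (r eps))) \<longlongrightarrow> 0) (at_right 0)"
    by (simp_all add: Bfun_mult_tendsto_0[OF bounded])
  then have "((\<lambda>eps. cscale (P eps * complex_of_real (coeff_E (r eps))) (ext_mult x ** KN lam tau 0) +
      cscale (P eps * complex_of_real (coeff_C (r eps))) (contr x ** KN lam tau 0)) \<longlongrightarrow> 0) (at_right 0)"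
    by (intro tendsto_add_zero bounded_linear.tendsto_zero[OF bounded_linear_cscale_left])
  moreover have "\<forall>\<^sub>F eps in at_right 0.
      cscale (P eps * complex_of_real (coeff_E (r eps))) (ext_mult x ** KN lam tau 0) +
      cscale (P eps * complex_of_real (coeff_C (r eps))) (contr x ** KN lam tau 0) =
      moyal_regularized lam eps (A_sym lam) (KN lam tau) x - moyal_regularized lam eps (KN lam tau) (A_sym lam) x"
    using pos
    by eventually_elim
       (simp only: moyal_regularized_cliff_KN[OF lam tau] moyal_regularized_KN_cliff[OF lam tau] cliff_KN_commutator
         P_def r_def coeff_E_def coeff_C_def beta_def \<theta>_def)
  ultimately show ?thesis
    by (rule Lim_transform_eventually)
qed

theorem lemmaC2:
  fixes lam tau :: real
  assumes "0 \<le> lam" and "lam \<le> 1" and "0 < tau"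
  shows "moyal lam (A_sym lam :: ('n::{finite,linorder}) symb) (KN lam tau)
       = moyal lam (KN lam tau) (A_sym lam)"
proof
  fix x :: "complex^'n::{finite,linorder}"
  show "moyal lam (A_sym lam) (KN lam tau) x = moyal lam (KN lam tau) (A_sym lam) x"
  proof (cases "lam = 0")
    case True
    have "cliff x ** KN 0 tau x = KN 0 tau x ** cliff x"
      by (simp add: cliff_def matrix_add_ldistrib matrix_add_rdistrib KN_ext_mult_commute KN_contr_commute)
    then show ?thesis
      by (simp add: moyal_def A_sym_def True)
  next
    case False
    show ?thesis
      unfolding moyal_eq_Lim[OF False]
      using tendsto_scaleR[OF tendsto_const moyal_regularized_commutator_tendsto_0[OF False assms(3)],
          of "inverse ((lam * pi) ^ (2 * CARD('n)))"]
      by (intro Lim_eq_if_diff_tendsto_0) (simp add: scaleR_diff_right)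
  qed
qed

end
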